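(* Let $\pi\colon U\to\mathbf{DT}$ be a type specification and $f\colon X\to Y$ a morphism of schemas of type $\pi$. For a sheaf $\mathcal{K}_Y$ on $Y$ define $f^*\mathcal{K}_Y$ on $\mathbf{Sub}(X)$ by $f^*\mathcal{K}_Y(U)=\mathcal{K}_Y(f(U))$, where $f(U)\in\mathbf{Sub}(Y)$ is the image of $U$; for a sheaf $\mathcal{K}_X$ on $X$ define $f_*\mathcal{K}_X$ on $\mathbf{Sub}(Y)$ by $f_*\mathcal{K}_X(V)=\mathcal{K}_X(f^{-1}(V))$, where $f^{-1}(V)\in\mathbf{Sub}(X)$ is the preimage of $V$. Then these define an adjunction $f^*\colon\mathbf{Shv}(Y)\rightleftarrows\mathbf{Shv}(X)\colon f_*$ with $f^*$ left adjoint to $f_*$.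
   Context: A type specification is a function of sets $\pi\colon U\to\mathbf{DT}$. A simple schema is a pair $(C,\sigma)$ with $C$ a finite (possibly empty) totally ordered set and $\sigma\colon C\to\mathbf{DT}$ a function; morphisms $(C,\sigma)\to(C',\sigma')$ are order-preserving $f\colon C\to C'$ with $\sigma'\circ f=\sigma$; this is the category $\mathcal{S}$. A schema of type $\pi$ is a functor $X\colon\mathcal{S}^{op}\to\mathbf{Sets}$; morphisms of schemas are natural transformations. A subschema of $X$ is a subfunctor $X'\subset X$; subschemas form a poset category $\mathbf{Sub}(X)$ under inclusion, in which the colimit of a diagram is the smallest subschema containing all its members. A sheaf on $X$ is a functor $\mathcal{K}\colon\mathbf{Sub}(X)^{op}\to\mathbf{Sets}$ such that for every diagram $D\colon I\to\mathbf{Sub}(X)$ the natural map $\mathcal{K}(\mathrm{colim}\,D)\to\lim\mathcal{K}\circ D$ is a bijection; $\mathbf{Shv}(X)$ is the category of sheaves with natural transformations. *)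

theory Defs
  imports Main "HOL-Library.FuncSet"
begin

text \<open>Simple schemas are represented by the skeleton of the category S: an object
  (C, sigma) with |C| = n is identified with the list [sigma(0),...,sigma(n-1)] of data
  types.\<close>

definition simple_mor :: "'dt list \<Rightarrow> 'dt list \<Rightarrow> (nat \<Rightarrow> nat) \<Rightarrow> bool" where
  "simple_mor s t h \<longleftrightarrow>
     (\<forall>i < length s. h i < length t \<and> t ! (h i) = s ! i) \<and>
     (\<forall>i j. i \<le> j \<and> j < length s \<longrightarrow> h i \<le> h j)"

text \<open>A schema: a functor S^op -> Sets, given by object sets X s and actions
  XA s t h : X t -> X s for a morphism h : s -> t.\<close>

definition is_schema :: "('dt list \<Rightarrow> 'x set) \<Rightarrow> ('dt list \<Rightarrow> 'dt list \<Rightarrow> (nat \<Rightarrow> nat) \<Rightarrow> 'x \<Rightarrow> 'x) \<Rightarrow> bool" where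
  "is_schema X XA \<longleftrightarrow>
     (\<forall>s t h. simple_mor s t h \<longrightarrow> XA s t h \<in> X t \<rightarrow> X s) \<and>
     (\<forall>s t h h'. simple_mor s t h \<and> (\<forall>i < length s. h i = h' i) \<longrightarrow>
        (\<forall>x \<in> X t. XA s t h x = XA s t h' x)) \<and>
     (\<forall>s. \<forall>x \<in> X s. XA s s id x = x) \<and>
     (\<forall>s t u h g. simple_mor s t h \<and> simple_mor t u g \<longrightarrow>
        (\<forall>x \<in> X u. XA s u (g \<circ> h) x = XA s t h (XA t u g x)))"

definition is_schema_mor ::
  "('dt list \<Rightarrow> 'x set) \<Rightarrow> ('dt list \<Rightarrow> 'dt list \<Rightarrow> (nat \<Rightarrow> nat) \<Rightarrow> 'x \<Rightarrow> 'x) \<Rightarrow>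
   ('dt list \<Rightarrow> 'y set) \<Rightarrow> ('dt list \<Rightarrow> 'dt list \<Rightarrow> (nat \<Rightarrow> nat) \<Rightarrow> 'y \<Rightarrow> 'y) \<Rightarrow>
   ('dt list \<Rightarrow> 'x \<Rightarrow> 'y) \<Rightarrow> bool" where
  "is_schema_mor X XA Y YA f \<longleftrightarrow>
     (\<forall>s. f s \<in> X s \<rightarrow> Y s) \<and>
     (\<forall>s t h. simple_mor s t h \<longrightarrow> (\<forall>x \<in> X t. f s (XA s t h x) = YA s t h (f t x)))"

definition is_subschema ::
  "('dt list \<Rightarrow> 'x set) \<Rightarrow> ('dt list \<Rightarrow> 'dt list \<Rightarrow> (nat \<Rightarrow> nat) \<Rightarrow> 'x \<Rightarrow> 'x) \<Rightarrow> ('dt list \<Rightarrow> 'x set) \<Rightarrow> bool" where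
  "is_subschema X XA S \<longleftrightarrow>
     (\<forall>s. S s \<subseteq> X s) \<and>
     (\<forall>s t h x. simple_mor s t h \<and> x \<in> S t \<longrightarrow> XA s t h x \<in> S s)"

definition sub_colim ::
  "('dt list \<Rightarrow> 'x set) \<Rightarrow> ('dt list \<Rightarrow> 'dt list \<Rightarrow> (nat \<Rightarrow> nat) \<Rightarrow> 'x \<Rightarrow> 'x) \<Rightarrow>
   'i set \<Rightarrow> ('i \<Rightarrow> 'dt list \<Rightarrow> 'x set) \<Rightarrow> 'dt list \<Rightarrow> 'x set" where
  "sub_colim X XA I D = (\<lambda>s. \<Inter> {S s | S. is_subschema X XA S \<and> (\<forall>i \<in> I. D i \<le> S)})"

definition is_presheaf ::
  "('dt list \<Rightarrow> 'x set) \<Rightarrow> ('dt list \<Rightarrow> 'dt list \<Rightarrow> (nat \<Rightarrow> nat) \<Rightarrow> 'x \<Rightarrow> 'x) \<Rightarrow>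
   (('dt list \<Rightarrow> 'x set) \<Rightarrow> 'a set) \<Rightarrow>
   (('dt list \<Rightarrow> 'x set) \<Rightarrow> ('dt list \<Rightarrow> 'x set) \<Rightarrow> 'a \<Rightarrow> 'a) \<Rightarrow> bool" where
  "is_presheaf X XA K r \<longleftrightarrow>
     (\<forall>U V. is_subschema X XA U \<and> is_subschema X XA V \<and> U \<le> V \<longrightarrow> r V U \<in> K V \<rightarrow> K U) \<and>
     (\<forall>U. is_subschema X XA U \<longrightarrow> (\<forall>a \<in> K U. r U U a = a)) \<and>
     (\<forall>U V W. is_subschema X XA U \<and> is_subschema X XA V \<and> is_subschema X XA W \<and> U \<le> V \<and> V \<le> W \<longrightarrow>
        (\<forall>a \<in> K W. r V U (r W V a) = r W U a))"

text \<open>Sheaf condition for all diagrams D : I -> Sub(X) whose index category has object set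
  I (a set of the index type 'i); the arrows of I are recorded by the relation R (only the
  existence of an arrow i -> j matters for the limit in Sets).\<close>
definition is_sheaf ::
  "'i itself \<Rightarrow> ('dt list \<Rightarrow> 'x set) \<Rightarrow> ('dt list \<Rightarrow> 'dt list \<Rightarrow> (nat \<Rightarrow> nat) \<Rightarrow> 'x \<Rightarrow> 'x) \<Rightarrow>
   (('dt list \<Rightarrow> 'x set) \<Rightarrow> 'a set) \<Rightarrow>
   (('dt list \<Rightarrow> 'x set) \<Rightarrow> ('dt list \<Rightarrow> 'x set) \<Rightarrow> 'a \<Rightarrow> 'a) \<Rightarrow> bool" where
  "is_sheaf ityp X XA K r \<longleftrightarrow> is_presheaf X XA K r \<and>
     (\<forall>(I :: 'i set) (R :: 'i \<Rightarrow> 'i \<Rightarrow> bool) D.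
        (\<forall>i \<in> I. is_subschema X XA (D i)) \<and>
        (\<forall>i j. R i j \<longrightarrow> i \<in> I \<and> j \<in> I \<and> D i \<le> D j) \<longrightarrow>
        bij_betw (\<lambda>a. \<lambda>i \<in> I. r (sub_colim X XA I D) (D i) a)
          (K (sub_colim X XA I D))
          {k \<in> extensional I. (\<forall>i \<in> I. k i \<in> K (D i)) \<and>
                               (\<forall>i j. R i j \<longrightarrow> r (D j) (D i) (k j) = k i)})"

definition shv_hom ::
  "('dt list \<Rightarrow> 'x set) \<Rightarrow> ('dt list \<Rightarrow> 'dt list \<Rightarrow> (nat \<Rightarrow> nat) \<Rightarrow> 'x \<Rightarrow> 'x) \<Rightarrow>
   (('dt list \<Rightarrow> 'x set) \<Rightarrow> 'a set) \<Rightarrow> (('dt list \<Rightarrow> 'x set) \<Rightarrow> ('dt list \<Rightarrow> 'x set) \<Rightarrow> 'a \<Rightarrow> 'a) \<Rightarrow>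
   (('dt list \<Rightarrow> 'x set) \<Rightarrow> 'b set) \<Rightarrow> (('dt list \<Rightarrow> 'x set) \<Rightarrow> ('dt list \<Rightarrow> 'x set) \<Rightarrow> 'b \<Rightarrow> 'b) \<Rightarrow>
   (('dt list \<Rightarrow> 'x set) \<Rightarrow> 'a \<Rightarrow> 'b) \<Rightarrow> bool" where
  "shv_hom X XA K r K' r' \<alpha> \<longleftrightarrow>
     (\<forall>U. is_subschema X XA U \<longrightarrow> \<alpha> U \<in> K U \<rightarrow> K' U) \<and>
     (\<forall>U V. is_subschema X XA U \<and> is_subschema X XA V \<and> U \<le> V \<longrightarrow>
        (\<forall>a \<in> K V. \<alpha> U (r V U a) = r' V U (\<alpha> V a)))"

definition sub_img :: "('dt list \<Rightarrow> 'x \<Rightarrow> 'y) \<Rightarrow> ('dt list \<Rightarrow> 'x set) \<Rightarrow> 'dt list \<Rightarrow> 'y set" where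
  "sub_img f U = (\<lambda>s. f s ` U s)"

definition sub_pre :: "('dt list \<Rightarrow> 'x set) \<Rightarrow> ('dt list \<Rightarrow> 'x \<Rightarrow> 'y) \<Rightarrow> ('dt list \<Rightarrow> 'y set) \<Rightarrow> 'dt list \<Rightarrow> 'x set" where
  "sub_pre X f V = (\<lambda>s. {x \<in> X s. f s x \<in> V s})"

definition pb_obj :: "('dt list \<Rightarrow> 'x \<Rightarrow> 'y) \<Rightarrow> (('dt list \<Rightarrow> 'y set) \<Rightarrow> 'a set) \<Rightarrow> ('dt list \<Rightarrow> 'x set) \<Rightarrow> 'a set" where
  "pb_obj f K = (\<lambda>U. K (sub_img f U))"

definition pb_res :: "('dt list \<Rightarrow> 'x \<Rightarrow> 'y) \<Rightarrow> (('dt list \<Rightarrow> 'y set) \<Rightarrow> ('dt list \<Rightarrow> 'y set) \<Rightarrow> 'a \<Rightarrow> 'a) \<Rightarrow>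
   ('dt list \<Rightarrow> 'x set) \<Rightarrow> ('dt list \<Rightarrow> 'x set) \<Rightarrow> 'a \<Rightarrow> 'a" where
  "pb_res f r = (\<lambda>U' U. r (sub_img f U') (sub_img f U))"

definition pf_obj :: "('dt list \<Rightarrow> 'x set) \<Rightarrow> ('dt list \<Rightarrow> 'x \<Rightarrow> 'y) \<Rightarrow> (('dt list \<Rightarrow> 'x set) \<Rightarrow> 'a set) \<Rightarrow> ('dt list \<Rightarrow> 'y set) \<Rightarrow> 'a set" where
  "pf_obj X f K = (\<lambda>V. K (sub_pre X f V))"

definition pf_res :: "('dt list \<Rightarrow> 'x set) \<Rightarrow> ('dt list \<Rightarrow> 'x \<Rightarrow> 'y) \<Rightarrow> (('dt list \<Rightarrow> 'x set) \<Rightarrow> ('dt list \<Rightarrow> 'x set) \<Rightarrow> 'a \<Rightarrow> 'a) \<Rightarrow>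
   ('dt list \<Rightarrow> 'y set) \<Rightarrow> ('dt list \<Rightarrow> 'y set) \<Rightarrow> 'a \<Rightarrow> 'a" where
  "pf_res X f r = (\<lambda>V' V. r (sub_pre X f V') (sub_pre X f V))"

end

theory Submission
  imports Defs
begin

text \<open>Colimits in \<open>Sub(X)\<close> are pointwise unions, and both image and preimage along \<open>f\<close> are
  monotone maps of subschema posets that preserve unions. Hence \<open>f\<^sup>*\<close> and \<open>f\<^sub>*\<close> are both
  instances of reindexing a sheaf along such a map, which preserves the sheaf condition and
  morphisms. Image is left adjoint to preimage: \<open>f(f\<^sup>-\<^sup>1(V)) \<subseteq> V\<close> and \<open>U \<subseteq> f\<^sup>-\<^sup>1(f(U))\<close>. So
  restriction along these inclusions gives the unit and the counit. The triangle identities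
  reduce to \<open>f \<circ> f\<^sup>-\<^sup>1 \<circ> f = f\<close> and \<open>f\<^sup>-\<^sup>1 \<circ> f \<circ> f\<^sup>-\<^sup>1 = f\<^sup>-\<^sup>1\<close>.\<close>

lemma sub_colim_eq_Union:
  assumes D: "\<forall>i\<in>I. is_subschema X XA (D i)"
  shows "sub_colim X XA I D = (\<lambda>s. \<Union>i\<in>I. D i s)"
proof -
  define W where "W = (\<lambda>s. \<Union>i\<in>I. D i s)"
  have "is_subschema X XA W"
    unfolding is_subschema_def
  proof (intro conjI allI impI)
    fix s show "W s \<subseteq> X s" using D unfolding is_subschema_def W_def by blast
  next
    fix s t h x assume h: "simple_mor s t h \<and> x \<in> W t"
    then obtain i where "i \<in> I" "x \<in> D i t" unfolding W_def by blast
    with D h have "XA s t h x \<in> D i s" unfolding is_subschema_def by blast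
    with \<open>i \<in> I\<close> show "XA s t h x \<in> W s" unfolding W_def by blast
  qed
  moreover have "\<forall>i\<in>I. D i \<le> W"
    unfolding W_def le_fun_def by blast
  moreover have "W \<le> S" if "\<forall>i\<in>I. D i \<le> S" for S
    using that unfolding W_def le_fun_def by blast
  ultimately have "sub_colim X XA I D s = W s" for s
    unfolding sub_colim_def le_fun_def by (intro equalityI) blast+
  then show ?thesis unfolding W_def by blast
qed

lemma is_subschema_sub_img:
  assumes f: "is_schema_mor X XA Y YA f" and U: "is_subschema X XA U"
  shows "is_subschema Y YA (sub_img f U)"
  unfolding is_subschema_def sub_img_def
proof (intro conjI allI impI)
  fix s show "f s ` U s \<subseteq> Y s"
    using f U unfolding is_schema_mor_def is_subschema_def by blast
next
  fix s t h y assume h: "simple_mor s t h \<and> y \<in> f t ` U t"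
  then obtain x where x: "x \<in> U t" "y = f t x" by blast
  with U have "x \<in> X t" unfolding is_subschema_def by blast
  with f h have "YA s t h y = f s (XA s t h x)"
    using x unfolding is_schema_mor_def by simp
  moreover have "XA s t h x \<in> U s"
    using U h x unfolding is_subschema_def by blast
  ultimately show "YA s t h y \<in> f s ` U s" by simp
qed

lemma is_subschema_sub_pre:
  assumes X: "is_schema X XA" and f: "is_schema_mor X XA Y YA f" and V: "is_subschema Y YA V"
  shows "is_subschema X XA (sub_pre X f V)"
  unfolding is_subschema_def sub_pre_def
proof (intro conjI allI impI)
  fix s show "{x \<in> X s. f s x \<in> V s} \<subseteq> X s" by blast
next
  fix s t h x assume h: "simple_mor s t h \<and> x \<in> {x \<in> X t. f t x \<in> V t}"
  have "XA s t h x \<in> X s"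
    using X h unfolding is_schema_def by blast
  moreover have "f s (XA s t h x) = YA s t h (f t x)"
    using f h unfolding is_schema_mor_def by blast
  moreover have "YA s t h (f t x) \<in> V s"
    using V h unfolding is_subschema_def by blast
  ultimately show "XA s t h x \<in> {x \<in> X s. f s x \<in> V s}" by simp
qed

lemma sub_img_mono: "U \<le> V \<Longrightarrow> sub_img f U \<le> sub_img f V"
  by (auto simp: sub_img_def le_fun_def)

lemma sub_pre_mono: "U \<le> V \<Longrightarrow> sub_pre X f U \<le> sub_pre X f V"
  by (auto simp: sub_pre_def le_fun_def)

lemma sub_img_sub_pre_le: "sub_img f (sub_pre X f V) \<le> V"
  by (auto simp: sub_img_def sub_pre_def le_fun_def)

lemma le_sub_pre_sub_img: "is_subschema X XA U \<Longrightarrow> U \<le> sub_pre X f (sub_img f U)"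
  by (auto simp: is_subschema_def sub_img_def sub_pre_def le_fun_def)

lemma sub_img_sub_pre_sub_img:
  "is_subschema X XA U \<Longrightarrow> sub_img f (sub_pre X f (sub_img f U)) = sub_img f U"
  unfolding is_subschema_def sub_img_def sub_pre_def by (rule ext) auto

lemma sub_pre_sub_img_sub_pre: "sub_pre X f (sub_img f (sub_pre X f V)) = sub_pre X f V"
  unfolding sub_img_def sub_pre_def by (rule ext) auto

lemma sub_img_sub_colim:
  assumes f: "is_schema_mor X XA Y YA f" and D: "\<forall>i\<in>I. is_subschema X XA (D i)"
  shows "sub_img f (sub_colim X XA I D) = sub_colim Y YA I (\<lambda>i. sub_img f (D i))"
proof -
  have "\<forall>i\<in>I. is_subschema Y YA (sub_img f (D i))"
    using D is_subschema_sub_img[OF f] by blast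
  then show ?thesis
    using D by (simp add: sub_colim_eq_Union sub_img_def image_UN)
qed

lemma sub_pre_sub_colim:
  assumes X: "is_schema X XA" and f: "is_schema_mor X XA Y YA f"
    and D: "\<forall>i\<in>I. is_subschema Y YA (D i)"
  shows "sub_pre X f (sub_colim Y YA I D) = sub_colim X XA I (\<lambda>i. sub_pre X f (D i))"
proof -
  have "\<forall>i\<in>I. is_subschema X XA (sub_pre X f (D i))"
    using D is_subschema_sub_pre[OF X f] by blast
  then show ?thesis
    using D by (simp add: sub_colim_eq_Union sub_pre_def) (rule ext, blast)
qed

lemma presheafD:
  assumes "is_presheaf X XA K r"
  shows "\<And>U V. is_subschema X XA U \<Longrightarrow> is_subschema X XA V \<Longrightarrow> U \<le> V \<Longrightarrow> r V U \<in> K V \<rightarrow> K U"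
    and "\<And>U a. is_subschema X XA U \<Longrightarrow> a \<in> K U \<Longrightarrow> r U U a = a"
    and "\<And>U V W a. is_subschema X XA U \<Longrightarrow> is_subschema X XA V \<Longrightarrow> is_subschema X XA W \<Longrightarrow>
          U \<le> V \<Longrightarrow> V \<le> W \<Longrightarrow> a \<in> K W \<Longrightarrow> r V U (r W V a) = r W U a"
  using assms unfolding is_presheaf_def by blast+

lemma shv_homD:
  assumes "shv_hom X XA K r K' r' \<alpha>"
  shows "\<And>U. is_subschema X XA U \<Longrightarrow> \<alpha> U \<in> K U \<rightarrow> K' U"
    and "\<And>U V a. is_subschema X XA U \<Longrightarrow> is_subschema X XA V \<Longrightarrow> U \<le> V \<Longrightarrow> a \<in> K V \<Longrightarrow>
           \<alpha> U (r V U a) = r' V U (\<alpha> V a)"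
  using assms unfolding shv_hom_def by blast+

lemma sheaf_is_presheaf: "is_sheaf ityp X XA K r \<Longrightarrow> is_presheaf X XA K r"
  unfolding is_sheaf_def by blast

lemma is_presheaf_reindex:
  assumes sub: "\<And>U. is_subschema X XA U \<Longrightarrow> is_subschema Y YA (g U)"
    and mono: "\<And>U V. U \<le> V \<Longrightarrow> g U \<le> g V"
    and K: "is_presheaf Y YA K r"
  shows "is_presheaf X XA (\<lambda>U. K (g U)) (\<lambda>V U. r (g V) (g U))"
  unfolding is_presheaf_def
  using presheafD[OF K] sub mono by (intro conjI allI impI ballI) auto

lemma shv_hom_reindex:
  assumes sub: "\<And>U. is_subschema X XA U \<Longrightarrow> is_subschema Y YA (g U)"
    and mono: "\<And>U V. U \<le> V \<Longrightarrow> g U \<le> g V"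
    and \<alpha>: "shv_hom Y YA K r K' r' \<alpha>"
  shows "shv_hom X XA (\<lambda>U. K (g U)) (\<lambda>V U. r (g V) (g U))
           (\<lambda>U. K' (g U)) (\<lambda>V U. r' (g V) (g U)) (\<lambda>U. \<alpha> (g U))"
  unfolding shv_hom_def
  using shv_homD[OF \<alpha>] sub mono by (intro conjI allI impI ballI) auto

lemma sheafD:
  fixes I :: "'i set"
  assumes "is_sheaf (ityp :: 'i itself) X XA K r"
    and "\<forall>i\<in>I. is_subschema X XA (D i)" and "\<forall>i j. R i j \<longrightarrow> i \<in> I \<and> j \<in> I \<and> D i \<le> D j"
  shows "bij_betw (\<lambda>a. \<lambda>i\<in>I. r (sub_colim X XA I D) (D i) a)
          (K (sub_colim X XA I D))
          {k \<in> extensional I. (\<forall>i\<in>I. k i \<in> K (D i)) \<and>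
                               (\<forall>i j. R i j \<longrightarrow> r (D j) (D i) (k j) = k i)}"
  using assms unfolding is_sheaf_def by (elim conjE allE[of _ I] allE[of _ R] allE[of _ D]) simp

lemma is_sheaf_reindex:
  fixes ityp :: "'i itself"
  assumes sub: "\<And>U. is_subschema X XA U \<Longrightarrow> is_subschema Y YA (g U)"
    and mono: "\<And>U V. U \<le> V \<Longrightarrow> g U \<le> g V"
    and colim: "\<And>(I :: 'i set) D. \<forall>i\<in>I. is_subschema X XA (D i) \<Longrightarrow>
                  g (sub_colim X XA I D) = sub_colim Y YA I (\<lambda>i. g (D i))"
    and K: "is_sheaf ityp Y YA K r"
  shows "is_sheaf ityp X XA (\<lambda>U. K (g U)) (\<lambda>V U. r (g V) (g U))"
  unfolding is_sheaf_def
proof (intro conjI allI impI)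
  show "is_presheaf X XA (\<lambda>U. K (g U)) (\<lambda>V U. r (g V) (g U))"
    using sub mono sheaf_is_presheaf[OF K] by (rule is_presheaf_reindex)
next
  fix I :: "'i set" and R D
  assume "(\<forall>i\<in>I. is_subschema X XA (D i)) \<and> (\<forall>i j. R i j \<longrightarrow> i \<in> I \<and> j \<in> I \<and> D i \<le> D j)"
  then have D: "\<forall>i\<in>I. is_subschema X XA (D i)" and R: "\<forall>i j. R i j \<longrightarrow> i \<in> I \<and> j \<in> I \<and> D i \<le> D j"
    by blast+
  have "\<forall>i\<in>I. is_subschema Y YA (g (D i))" "\<forall>i j. R i j \<longrightarrow> i \<in> I \<and> j \<in> I \<and> g (D i) \<le> g (D j)"
    using D R sub mono by blast+
  from sheafD[OF K this]
  show "bij_betw (\<lambda>a. \<lambda>i\<in>I. r (g (sub_colim X XA I D)) (g (D i)) a)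
      (K (g (sub_colim X XA I D)))
      {k \<in> extensional I. (\<forall>i\<in>I. k i \<in> K (g (D i))) \<and>
                           (\<forall>i j. R i j \<longrightarrow> r (g (D j)) (g (D i)) (k j) = k i)}"
    unfolding colim[OF D] .
qed

lemma is_sheaf_pb:
  assumes f: "is_schema_mor X XA Y YA f" and K: "is_sheaf ityp Y YA K r"
  shows "is_sheaf ityp X XA (pb_obj f K) (pb_res f r)"
  unfolding pb_obj_def pb_res_def
  using is_subschema_sub_img[OF f] sub_img_mono sub_img_sub_colim[OF f] K
  by (rule is_sheaf_reindex)

lemma is_sheaf_pf:
  assumes X: "is_schema X XA" and f: "is_schema_mor X XA Y YA f" and K: "is_sheaf ityp X XA K r"
  shows "is_sheaf ityp Y YA (pf_obj X f K) (pf_res X f r)"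
  unfolding pf_obj_def pf_res_def
  using is_subschema_sub_pre[OF X f] sub_pre_mono sub_pre_sub_colim[OF X f] K
  by (rule is_sheaf_reindex)

lemma shv_hom_pb:
  assumes f: "is_schema_mor X XA Y YA f" and \<alpha>: "shv_hom Y YA K r K' r' \<alpha>"
  shows "shv_hom X XA (pb_obj f K) (pb_res f r) (pb_obj f K') (pb_res f r') (\<lambda>U. \<alpha> (sub_img f U))"
  unfolding pb_obj_def pb_res_def
  using is_subschema_sub_img[OF f] sub_img_mono \<alpha> by (rule shv_hom_reindex)

lemma shv_hom_pf:
  assumes X: "is_schema X XA" and f: "is_schema_mor X XA Y YA f" and \<alpha>: "shv_hom X XA K r K' r' \<alpha>"
  shows "shv_hom Y YA (pf_obj X f K) (pf_res X f r) (pf_obj X f K') (pf_res X f r') (\<lambda>V. \<alpha> (sub_pre X f V))"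
  unfolding pf_obj_def pf_res_def
  using is_subschema_sub_pre[OF X f] sub_pre_mono \<alpha> by (rule shv_hom_reindex)

lemma shv_hom_restrict_along_deflation:
  assumes K: "is_presheaf X XA K r"
    and sub: "\<And>U. is_subschema X XA U \<Longrightarrow> is_subschema X XA (c U)"
    and defl: "\<And>U. is_subschema X XA U \<Longrightarrow> c U \<le> U"
    and mono: "\<And>U V. U \<le> V \<Longrightarrow> c U \<le> c V"
  shows "shv_hom X XA K r (\<lambda>U. K (c U)) (\<lambda>V U. r (c V) (c U)) (\<lambda>U. r U (c U))"
  unfolding shv_hom_def
proof (intro conjI allI impI ballI)
  fix U assume "is_subschema X XA U"
  then show "r U (c U) \<in> K U \<rightarrow> K (c U)"
    using presheafD(1)[OF K] sub defl by blast
next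
  fix U V a assume UV: "is_subschema X XA U \<and> is_subschema X XA V \<and> U \<le> V" and a: "a \<in> K V"
  then have "c U \<le> c V" "c V \<le> V" "c U \<le> U" using mono defl by auto
  then have "r U (c U) (r V U a) = r V (c U) a" and "r (c V) (c U) (r V (c V) a) = r V (c U) a"
    using UV a presheafD(3)[OF K] sub by blast+
  then show "r U (c U) (r V U a) = r (c V) (c U) (r V (c V) a)" by simp
qed

lemma shv_hom_restrict_along_inflation:
  assumes K: "is_presheaf X XA K r"
    and sub: "\<And>U. is_subschema X XA U \<Longrightarrow> is_subschema X XA (c U)"
    and infl: "\<And>U. is_subschema X XA U \<Longrightarrow> U \<le> c U"
    and mono: "\<And>U V. U \<le> V \<Longrightarrow> c U \<le> c V"
  shows "shv_hom X XA (\<lambda>U. K (c U)) (\<lambda>V U. r (c V) (c U)) K r (\<lambda>U. r (c U) U)"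
  unfolding shv_hom_def
proof (intro conjI allI impI ballI)
  fix U assume "is_subschema X XA U"
  then show "r (c U) U \<in> K (c U) \<rightarrow> K U"
    using presheafD(1)[OF K] sub infl by blast
next
  fix U V a assume UV: "is_subschema X XA U \<and> is_subschema X XA V \<and> U \<le> V" and a: "a \<in> K (c V)"
  then have "c U \<le> c V" "V \<le> c V" "U \<le> c U" using mono infl by auto
  then have "r (c U) U (r (c V) (c U) a) = r (c V) U a" and "r V U (r (c V) V a) = r (c V) U a"
    using UV a presheafD(3)[OF K] sub by blast+
  then show "r (c U) U (r (c V) (c U) a) = r V U (r (c V) V a)" by simp
qed

definition adj_unit ::
  "('dt list \<Rightarrow> 'x set) \<Rightarrow> ('dt list \<Rightarrow> 'x \<Rightarrow> 'y) \<Rightarrow>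
   (('dt list \<Rightarrow> 'y set) \<Rightarrow> ('dt list \<Rightarrow> 'y set) \<Rightarrow> 'a \<Rightarrow> 'a) \<Rightarrow> ('dt list \<Rightarrow> 'y set) \<Rightarrow> 'a \<Rightarrow> 'a" where
  "adj_unit X f r V = r V (sub_img f (sub_pre X f V))"

definition adj_counit ::
  "('dt list \<Rightarrow> 'x set) \<Rightarrow> ('dt list \<Rightarrow> 'x \<Rightarrow> 'y) \<Rightarrow>
   (('dt list \<Rightarrow> 'x set) \<Rightarrow> ('dt list \<Rightarrow> 'x set) \<Rightarrow> 'a \<Rightarrow> 'a) \<Rightarrow> ('dt list \<Rightarrow> 'x set) \<Rightarrow> 'a \<Rightarrow> 'a" where
  "adj_counit X f r U = r (sub_pre X f (sub_img f U)) U"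

lemma shv_hom_adj_unit:
  assumes X: "is_schema X XA" and f: "is_schema_mor X XA Y YA f" and K: "is_presheaf Y YA K r"
  shows "shv_hom Y YA K r (pf_obj X f (pb_obj f K)) (pf_res X f (pb_res f r)) (adj_unit X f r)"
  unfolding pf_obj_def pb_obj_def pf_res_def pb_res_def adj_unit_def
  using K by (rule shv_hom_restrict_along_deflation)
    (auto intro: is_subschema_sub_img[OF f] is_subschema_sub_pre[OF X f]
          sub_img_sub_pre_le sub_img_mono sub_pre_mono)

lemma shv_hom_adj_counit:
  assumes X: "is_schema X XA" and f: "is_schema_mor X XA Y YA f" and K: "is_presheaf X XA K r"
  shows "shv_hom X XA (pb_obj f (pf_obj X f K)) (pb_res f (pf_res X f r)) K r (adj_counit X f r)"
  unfolding pf_obj_def pb_obj_def pf_res_def pb_res_def adj_counit_def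
  using K by (rule shv_hom_restrict_along_inflation)
    (auto intro: is_subschema_sub_img[OF f] is_subschema_sub_pre[OF X f]
          le_sub_pre_sub_img sub_img_mono sub_pre_mono)

lemma adj_unit_natural:
  assumes X: "is_schema X XA" and f: "is_schema_mor X XA Y YA f"
    and \<alpha>: "shv_hom Y YA K r K' r' \<alpha>" and V: "is_subschema Y YA V" and a: "a \<in> K V"
  shows "adj_unit X f r' V (\<alpha> V a) = \<alpha> (sub_img f (sub_pre X f V)) (adj_unit X f r V a)"
  unfolding adj_unit_def
  using shv_homD(2)[OF \<alpha> is_subschema_sub_img[OF f is_subschema_sub_pre[OF X f V]] V
      sub_img_sub_pre_le a] by simp

lemma adj_counit_natural:
  assumes X: "is_schema X XA" and f: "is_schema_mor X XA Y YA f"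
    and \<alpha>: "shv_hom X XA K r K' r' \<alpha>" and U: "is_subschema X XA U"
    and a: "a \<in> K (sub_pre X f (sub_img f U))"
  shows "adj_counit X f r' U (\<alpha> (sub_pre X f (sub_img f U)) a) = \<alpha> U (adj_counit X f r U a)"
  unfolding adj_counit_def
  using shv_homD(2)[OF \<alpha> U is_subschema_sub_pre[OF X f is_subschema_sub_img[OF f U]]
      le_sub_pre_sub_img[OF U] a] by simp

lemma adj_triangle_pb:
  assumes f: "is_schema_mor X XA Y YA f" and K: "is_presheaf Y YA K r"
    and U: "is_subschema X XA U" and a: "a \<in> K (sub_img f U)"
  shows "adj_counit X f (pb_res f r) U (adj_unit X f r (sub_img f U) a) = a"
  using presheafD(2)[OF K is_subschema_sub_img[OF f U]] a
  by (simp add: adj_counit_def adj_unit_def pb_res_def sub_img_sub_pre_sub_img[OF U])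

lemma adj_triangle_pf:
  assumes X: "is_schema X XA" and f: "is_schema_mor X XA Y YA f" and K: "is_presheaf X XA K r"
    and V: "is_subschema Y YA V" and a: "a \<in> K (sub_pre X f V)"
  shows "adj_counit X f r (sub_pre X f V) (adj_unit X f (pf_res X f r) V a) = a"
  using presheafD(2)[OF K is_subschema_sub_pre[OF X f V]] a
  by (simp add: adj_counit_def adj_unit_def pf_res_def sub_pre_sub_img_sub_pre)

theorem lemma4p2p8:
  fixes pi :: "'u \<Rightarrow> 'dt"
    and ityp :: "'i itself"
    and X :: "'dt list \<Rightarrow> 'x set" and XA :: "'dt list \<Rightarrow> 'dt list \<Rightarrow> (nat \<Rightarrow> nat) \<Rightarrow> 'x \<Rightarrow> 'x"
    and Y :: "'dt list \<Rightarrow> 'y set" and YA :: "'dt list \<Rightarrow> 'dt list \<Rightarrow> (nat \<Rightarrow> nat) \<Rightarrow> 'y \<Rightarrow> 'y"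
    and f :: "'dt list \<Rightarrow> 'x \<Rightarrow> 'y"
  assumes "is_schema X XA" and "is_schema Y YA" and "is_schema_mor X XA Y YA f"
  shows
    \<comment> \<open>f^* sends sheaves on Y to sheaves on X, and morphisms to morphisms\<close>
    "(\<forall>(K :: ('dt list \<Rightarrow> 'y set) \<Rightarrow> 'a set) r.
        is_sheaf ityp Y YA K r \<longrightarrow> is_sheaf ityp X XA (pb_obj f K) (pb_res f r)) \<and>
     (\<forall>(K :: ('dt list \<Rightarrow> 'y set) \<Rightarrow> 'a set) r (K' :: ('dt list \<Rightarrow> 'y set) \<Rightarrow> 'b set) r' \<alpha>.
        is_sheaf ityp Y YA K r \<and> is_sheaf ityp Y YA K' r' \<and> shv_hom Y YA K r K' r' \<alpha> \<longrightarrow>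
        shv_hom X XA (pb_obj f K) (pb_res f r) (pb_obj f K') (pb_res f r') (\<lambda>U. \<alpha> (sub_img f U))) \<and>
     \<comment> \<open>f_* sends sheaves on X to sheaves on Y, and morphisms to morphisms\<close>
     (\<forall>(K :: ('dt list \<Rightarrow> 'x set) \<Rightarrow> 'a set) r.
        is_sheaf ityp X XA K r \<longrightarrow> is_sheaf ityp Y YA (pf_obj X f K) (pf_res X f r)) \<and>
     (\<forall>(K :: ('dt list \<Rightarrow> 'x set) \<Rightarrow> 'a set) r (K' :: ('dt list \<Rightarrow> 'x set) \<Rightarrow> 'b set) r' \<alpha>.
        is_sheaf ityp X XA K r \<and> is_sheaf ityp X XA K' r' \<and> shv_hom X XA K r K' r' \<alpha> \<longrightarrow>
        shv_hom Y YA (pf_obj X f K) (pf_res X f r) (pf_obj X f K') (pf_res X f r') (\<lambda>V. \<alpha> (sub_pre X f V))) \<and>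
     \<comment> \<open>adjunction f^* -| f_* via unit eta and counit eps\<close>
     (\<exists>(\<eta> :: (('dt list \<Rightarrow> 'y set) \<Rightarrow> 'a set) \<Rightarrow> (('dt list \<Rightarrow> 'y set) \<Rightarrow> ('dt list \<Rightarrow> 'y set) \<Rightarrow> 'a \<Rightarrow> 'a)
                 \<Rightarrow> ('dt list \<Rightarrow> 'y set) \<Rightarrow> 'a \<Rightarrow> 'a)
        (\<epsilon> :: (('dt list \<Rightarrow> 'x set) \<Rightarrow> 'a set) \<Rightarrow> (('dt list \<Rightarrow> 'x set) \<Rightarrow> ('dt list \<Rightarrow> 'x set) \<Rightarrow> 'a \<Rightarrow> 'a)
                 \<Rightarrow> ('dt list \<Rightarrow> 'x set) \<Rightarrow> 'a \<Rightarrow> 'a).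
        (\<forall>K r. is_sheaf ityp Y YA K r \<longrightarrow>
           shv_hom Y YA K r (pf_obj X f (pb_obj f K)) (pf_res X f (pb_res f r)) (\<eta> K r)) \<and>
        (\<forall>K r K' r' \<alpha>. is_sheaf ityp Y YA K r \<and> is_sheaf ityp Y YA K' r' \<and> shv_hom Y YA K r K' r' \<alpha> \<longrightarrow>
           (\<forall>V. is_subschema Y YA V \<longrightarrow> (\<forall>a \<in> K V.
              \<eta> K' r' V (\<alpha> V a) = \<alpha> (sub_img f (sub_pre X f V)) (\<eta> K r V a)))) \<and>
        (\<forall>K r. is_sheaf ityp X XA K r \<longrightarrow>
           shv_hom X XA (pb_obj f (pf_obj X f K)) (pb_res f (pf_res X f r)) K r (\<epsilon> K r)) \<and>
        (\<forall>K r K' r' \<alpha>. is_sheaf ityp X XA K r \<and> is_sheaf ityp X XA K' r' \<and> shv_hom X XA K r K' r' \<alpha> \<longrightarrow>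
           (\<forall>U. is_subschema X XA U \<longrightarrow> (\<forall>a \<in> K (sub_pre X f (sub_img f U)).
              \<epsilon> K' r' U (\<alpha> (sub_pre X f (sub_img f U)) a) = \<alpha> U (\<epsilon> K r U a)))) \<and>
        (\<forall>K r. is_sheaf ityp Y YA K r \<longrightarrow>
           (\<forall>U. is_subschema X XA U \<longrightarrow> (\<forall>a \<in> K (sub_img f U).
              \<epsilon> (pb_obj f K) (pb_res f r) U (\<eta> K r (sub_img f U) a) = a))) \<and>
        (\<forall>K r. is_sheaf ityp X XA K r \<longrightarrow>
           (\<forall>V. is_subschema Y YA V \<longrightarrow> (\<forall>a \<in> K (sub_pre X f V).
              \<epsilon> K r (sub_pre X f V) (\<eta> (pf_obj X f K) (pf_res X f r) V a) = a))))"
proof -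
  note X = assms(1) and f = assms(3)
  show ?thesis
  proof (intro conjI exI[of _ "\<lambda>K. adj_unit X f"] exI[of _ "\<lambda>K. adj_counit X f"] allI impI ballI;
         (elim conjE)?)
  qed (rule is_sheaf_pb[OF f] is_sheaf_pf[OF X f] shv_hom_pb[OF f] shv_hom_pf[OF X f]
         shv_hom_adj_unit[OF X f] shv_hom_adj_counit[OF X f] adj_unit_natural[OF X f]
         adj_counit_natural[OF X f] adj_triangle_pb[OF f] adj_triangle_pf[OF X f]
         sheaf_is_presheaf | assumption)+
qed

end
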